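(* Let $(Z,Z_{ac})$ be an accretive matrix-ordered vector space and let $((V,V_{ac}),\phi)$ be a $*$-closure of $(Z,Z_{ac})$. Then for all $n$ and $x,y\in M_n(Z)$: (i) $\phi^{(n)}(x)+\phi^{(n)}(y)^*\in V_{ac}^n$ if and only if $x+y\in Z_{ac}^n$; (ii) $\phi^{(n)}(x)+\phi^{(n)}(y)^*=0$ if and only if $x,y\in\operatorname{span}_{\mathbb{C}}Z_{sa}^n$ and $y=-x^*$.
   Context: For a complex vector space $Z$, $M_n(Z)$ is the $n\times n$ matrices over $Z$. A cone is a set $C$ with $C+C\subseteq C$, $tC\subseteq C$ ($t\ge0$). A matrix cone is a sequence of cones $C_n\subseteq M_n(Z)$ with $X^*C_nX\subseteq C_k$ for all scalar $X\in M_{n,k}$; it is $\mathbb{C}$-proper if $C_1\cap-C_1\cap iC_1\cap-iC_1=\{0\}$, and then $(Z,Z_{ac})$, $Z_{ac}=\{Z_{ac}^n\}$, is an accretive matrix-ordered vector space, with $Z_{sa}^n=iZ_{ac}^n\cap-iZ_{ac}^n$ and $Z_+^n=Z_{sa}^n\cap Z_{ac}^n$. For $W=\operatorname{span}_{\mathbb{C}}Z_{sa}^1$, one has $\operatorname{span}_{\mathbb{C}}Z_{sa}^n=M_n(W)$ and there is a unique conjugate-linear involution $*$ on $M_n(W)$ fixing each element of $Z_{sa}^n$, given by $[z_{kl}]^*=[z_{lk}^*]$; this defines $x^*$ in (ii). $(Z,Z_{ac})$ is self-adjoint if $Z=\operatorname{span}_{\mathbb{C}}Z_{sa}^1$ (so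 $Z$ itself carries this involution). A linear map $\phi$ is real-completely positive if $\phi^{(n)}(Z_{ac}^n)\subseteq V_{ac}^n$ for all $n$ ($\phi^{(n)}$ = entrywise application); a real-complete order embedding if injective and both $\phi$ and $\phi^{-1}$ (on the range) are real-completely positive. A $*$-closure of $(Z,Z_{ac})$ is a pair $((V,V_{ac}),\phi)$ with $(V,V_{ac})$ a self-adjoint accretive matrix-ordered vector space, $\phi:Z\to V$ a real-complete order embedding, and $V=\phi(Z)+\phi(Z)^*$ with respect to the involution of $V$. *)

theory Defs
  imports "HOL-Analysis.Analysis" "HOL-Library.Function_Algebras"
begin

text \<open>A complex vector space is modelled as a type 'a :: ab_group_add together with
  a scalar multiplication s :: complex \<Rightarrow> 'a \<Rightarrow> 'a satisfying vector_space s.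
  Matrices over 'a are functions nat \<Rightarrow> nat \<Rightarrow> 'a; M_n is the set of those vanishing
  outside the index square {0..<n} x {0..<n}.\<close>

definition mat_set :: "nat \<Rightarrow> (nat \<Rightarrow> nat \<Rightarrow> 'a::zero) set" where
  "mat_set n = {x. \<forall>i j. n \<le> i \<or> n \<le> j \<longrightarrow> x i j = 0}"

definition mscale :: "(complex \<Rightarrow> 'a \<Rightarrow> 'a) \<Rightarrow> complex \<Rightarrow> (nat \<Rightarrow> nat \<Rightarrow> 'a) \<Rightarrow> (nat \<Rightarrow> nat \<Rightarrow> 'a)" where
  "mscale s c x = (\<lambda>i j. s c (x i j))"

text \<open>X^* x X for a scalar n x k matrix X and x in M_n.\<close>
definition congr :: "(complex \<Rightarrow> 'a \<Rightarrow> 'a) \<Rightarrow> nat \<Rightarrow> nat \<Rightarrow> (nat \<Rightarrow> nat \<Rightarrow> complex)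
    \<Rightarrow> (nat \<Rightarrow> nat \<Rightarrow> 'a::comm_monoid_add) \<Rightarrow> (nat \<Rightarrow> nat \<Rightarrow> 'a)" where
  "congr s n k X x = (\<lambda>i j. if i < k \<and> j < k
      then (\<Sum>p<n. \<Sum>q<n. s (cnj (X p i) * X q j) (x p q)) else 0)"

definition is_cone :: "(complex \<Rightarrow> 'a \<Rightarrow> 'a) \<Rightarrow> (nat \<Rightarrow> nat \<Rightarrow> 'a::plus) set \<Rightarrow> bool" where
  "is_cone s K \<longleftrightarrow> (\<forall>a\<in>K. \<forall>b\<in>K. a + b \<in> K) \<and>
     (\<forall>t::real. t \<ge> 0 \<longrightarrow> (\<forall>a\<in>K. mscale s (complex_of_real t) a \<in> K))"

definition matrix_cone :: "(complex \<Rightarrow> 'a \<Rightarrow> 'a) \<Rightarrow> (nat \<Rightarrow> (nat \<Rightarrow> nat \<Rightarrow> 'a::comm_monoid_add) set) \<Rightarrow> bool" where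
  "matrix_cone s C \<longleftrightarrow> (\<forall>n. C n \<subseteq> mat_set n \<and> is_cone s (C n)) \<and>
     (\<forall>n k X. \<forall>x\<in>C n. congr s n k X x \<in> C k)"

definition C_proper :: "(complex \<Rightarrow> 'a \<Rightarrow> 'a) \<Rightarrow> (nat \<Rightarrow> (nat \<Rightarrow> nat \<Rightarrow> 'a::ab_group_add) set) \<Rightarrow> bool" where
  "C_proper s C \<longleftrightarrow>
     {x \<in> C 1. -x \<in> C 1 \<and> mscale s (-\<i>) x \<in> C 1 \<and> mscale s \<i> x \<in> C 1} = {0}"

definition amovs :: "(complex \<Rightarrow> 'a \<Rightarrow> 'a) \<Rightarrow> (nat \<Rightarrow> (nat \<Rightarrow> nat \<Rightarrow> 'a::ab_group_add) set) \<Rightarrow> bool" where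
  "amovs s C \<longleftrightarrow> vector_space s \<and> matrix_cone s C \<and> C_proper s C"

text \<open>Z_sa^n = i Z_ac^n \<inter> -i Z_ac^n  (x \<in> iC iff -i x \<in> C).\<close>
definition sa :: "(complex \<Rightarrow> 'a \<Rightarrow> 'a) \<Rightarrow> (nat \<Rightarrow> (nat \<Rightarrow> nat \<Rightarrow> 'a) set) \<Rightarrow> nat \<Rightarrow> (nat \<Rightarrow> nat \<Rightarrow> 'a) set" where
  "sa s C n = {x. mscale s (-\<i>) x \<in> C n \<and> mscale s \<i> x \<in> C n}"

definition pos :: "(complex \<Rightarrow> 'a \<Rightarrow> 'a) \<Rightarrow> (nat \<Rightarrow> (nat \<Rightarrow> nat \<Rightarrow> 'a) set) \<Rightarrow> nat \<Rightarrow> (nat \<Rightarrow> nat \<Rightarrow> 'a) set" where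
  "pos s C n = sa s C n \<inter> C n"

definition smat :: "'a::zero \<Rightarrow> (nat \<Rightarrow> nat \<Rightarrow> 'a)" where
  "smat z = (\<lambda>i j. if i = 0 \<and> j = 0 then z else 0)"

text \<open>Z_sa^1 viewed as a subset of Z (1x1 matrices identified with elements).\<close>
definition sa1 :: "(complex \<Rightarrow> 'a \<Rightarrow> 'a) \<Rightarrow> (nat \<Rightarrow> (nat \<Rightarrow> nat \<Rightarrow> 'a::zero) set) \<Rightarrow> 'a set" where
  "sa1 s C = {z. smat z \<in> sa s C 1}"

definition inv1 :: "(complex \<Rightarrow> 'a \<Rightarrow> 'a) \<Rightarrow> (nat \<Rightarrow> (nat \<Rightarrow> nat \<Rightarrow> 'a::ab_group_add) set) \<Rightarrow> 'a \<Rightarrow> 'a" where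
  "inv1 s C z = (SOME w. \<exists>a b. a \<in> sa1 s C \<and> b \<in> sa1 s C \<and> z = a + s \<i> b \<and> w = a - s \<i> b)"

definition madj :: "(complex \<Rightarrow> 'a \<Rightarrow> 'a) \<Rightarrow> (nat \<Rightarrow> (nat \<Rightarrow> nat \<Rightarrow> 'a::ab_group_add) set) \<Rightarrow> nat
    \<Rightarrow> (nat \<Rightarrow> nat \<Rightarrow> 'a) \<Rightarrow> (nat \<Rightarrow> nat \<Rightarrow> 'a)" where
  "madj s C n x = (\<lambda>i j. if i < n \<and> j < n then inv1 s C (x j i) else 0)"

definition self_adjoint :: "(complex \<Rightarrow> 'a \<Rightarrow> 'a) \<Rightarrow> (nat \<Rightarrow> (nat \<Rightarrow> nat \<Rightarrow> 'a::ab_group_add) set) \<Rightarrow> bool" where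
  "self_adjoint s C \<longleftrightarrow> module.span s (sa1 s C) = UNIV"

definition mapn :: "('a \<Rightarrow> 'b) \<Rightarrow> (nat \<Rightarrow> nat \<Rightarrow> 'a) \<Rightarrow> (nat \<Rightarrow> nat \<Rightarrow> 'b)" where
  "mapn f x = (\<lambda>i j. f (x i j))"

definition real_cp :: "(nat \<Rightarrow> (nat \<Rightarrow> nat \<Rightarrow> 'a) set) \<Rightarrow> (nat \<Rightarrow> (nat \<Rightarrow> nat \<Rightarrow> 'b) set) \<Rightarrow> ('a \<Rightarrow> 'b) \<Rightarrow> bool" where
  "real_cp C D f \<longleftrightarrow> (\<forall>n. \<forall>x\<in>C n. mapn f x \<in> D n)"

definition real_coe :: "(nat \<Rightarrow> (nat \<Rightarrow> nat \<Rightarrow> 'a::zero) set) \<Rightarrow> (nat \<Rightarrow> (nat \<Rightarrow> nat \<Rightarrow> 'b) set) \<Rightarrow> ('a \<Rightarrow> 'b) \<Rightarrow> bool" where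
  "real_coe C D f \<longleftrightarrow> inj f \<and> real_cp C D f \<and>
     (\<forall>n. \<forall>x\<in>mat_set n. mapn f x \<in> D n \<longrightarrow> x \<in> C n)"

definition star_closure :: "(complex \<Rightarrow> 'a \<Rightarrow> 'a) \<Rightarrow> (nat \<Rightarrow> (nat \<Rightarrow> nat \<Rightarrow> 'a::ab_group_add) set)
    \<Rightarrow> (complex \<Rightarrow> 'b \<Rightarrow> 'b) \<Rightarrow> (nat \<Rightarrow> (nat \<Rightarrow> nat \<Rightarrow> 'b::ab_group_add) set) \<Rightarrow> ('a \<Rightarrow> 'b) \<Rightarrow> bool" where
  "star_closure sZ C sV D \<phi> \<longleftrightarrow> amovs sV D \<and> self_adjoint sV D \<and> Vector_Spaces.linear sZ sV \<phi> \<and>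
     real_coe C D \<phi> \<and> (\<forall>v. \<exists>a b. v = \<phi> a + inv1 sV D (\<phi> b))"

end

theory Submission
  imports Defs
begin

text \<open>
  Call \<open>N\<^sub>n = V\<^sub>a\<^sub>c\<^sup>n \<inter> -V\<^sub>a\<^sub>c\<^sup>n\<close> the neutral part of the cone. Over a self-adjoint space every
  skew part \<open>w - w\<^sup>*\<close> lies in \<open>N\<^sub>n\<close>: writing each entry as \<open>p + \<i> q\<close> with \<open>p, q\<close> self-adjoint,
  \<open>w - w\<^sup>*\<close> is a sum of congruence images of the \<open>1 \<times> 1\<close> matrices \<open>\<i> p\<close> and \<open>\<i> q\<close>, which are
  neutral. With \<open>w = \<phi>(y)\<close> we get \<open>\<phi>(x) + w\<^sup>* = \<phi>(x + y) - (w - w\<^sup>*)\<close>, and adding a neutral element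
  does not change membership in the cone; since \<open>\<phi>\<close> is an order embedding, (i) follows.
  If \<open>\<phi>(x) + \<phi>(y)\<^sup>* = 0\<close>, the same identity and its analogue for \<open>\<i> w\<close> put \<open>x + y\<close> and
  \<open>\<i> (x - y)\<close> into the neutral part of \<open>Z\<close>, i.e. \<open>x - y\<close> and \<open>-\<i> (x + y)\<close> are self-adjoint; hence
  \<open>x = a + \<i> b\<close> and \<open>y = -a + \<i> b\<close> with \<open>a, b\<close> self-adjoint, which is (ii) since the involution
  maps \<open>a + \<i> b\<close> to \<open>a - \<i> b\<close>. That last fact rests on uniqueness of the decomposition
  \<open>p + \<i> q\<close> of an element of \<open>span Z\<^sub>s\<^sub>a\<^sup>1\<close>, which is exactly \<open>\<complex>\<close>-properness.
\<close>

lemma sum_matrix_apply: "(\<Sum>i\<in>A. f i) a b = (\<Sum>i\<in>A. f i a b)"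
  by (induction A rule: infinite_finite_induct) auto

lemma complex_span_of_real_subspace:
  fixes s :: "complex \<Rightarrow> 'b::ab_group_add \<Rightarrow> 'b"
  assumes "module s" and "0 \<in> R" and add: "\<And>a b. a \<in> R \<Longrightarrow> b \<in> R \<Longrightarrow> a + b \<in> R"
    and real_scale: "\<And>r a. a \<in> R \<Longrightarrow> s (of_real r) a \<in> R"
  shows "module.span s R = {a + s \<i> b | a b. a \<in> R \<and> b \<in> R}"
proof -
  interpret module s by fact
  let ?K = "{a + s \<i> b | a b. a \<in> R \<and> b \<in> R}"
  have diff: "a - b \<in> R" if "a \<in> R" "b \<in> R" for a b
    using add[OF that(1) real_scale[OF that(2), of "-1"]] by simp
  have "s c (a + s \<i> b) \<in> ?K" if "a \<in> R" "b \<in> R" for a b c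
  proof -
    have c: "c = of_real (Re c) + \<i> * of_real (Im c)" "c * \<i> = \<i> * of_real (Re c) - of_real (Im c)"
      by (simp_all add: complex_eq_iff)
    have "s c (a + s \<i> b) = s c a + s (c * \<i>) b"
      by (simp add: scale_right_distrib)
    also have "\<dots> = (s (of_real (Re c)) a - s (of_real (Im c)) b)
        + s \<i> (s (of_real (Im c)) a + s (of_real (Re c)) b)"
      by (subst (1 2) c) (simp add: algebra_simps)
    finally have "s c (a + s \<i> b) = (s (of_real (Re c)) a - s (of_real (Im c)) b)
        + s \<i> (s (of_real (Im c)) a + s (of_real (Re c)) b)" .
    moreover have "s (of_real (Re c)) a - s (of_real (Im c)) b \<in> R"
      "s (of_real (Im c)) a + s (of_real (Re c)) b \<in> R"
      using that by (auto intro: diff add real_scale)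
    ultimately show ?thesis by blast
  qed
  moreover have "a + s \<i> b + (a' + s \<i> b') \<in> ?K"
    if "a \<in> R" "b \<in> R" "a' \<in> R" "b' \<in> R" for a b a' b'
  proof -
    have "a + s \<i> b + (a' + s \<i> b') = (a + a') + s \<i> (b + b')"
      by (simp add: scale_right_distrib)
    then show ?thesis using that add by blast
  qed
  moreover have "0 \<in> ?K"
    using \<open>0 \<in> R\<close> by force
  ultimately have "subspace ?K"
    unfolding subspace_def by blast
  moreover have "R \<subseteq> ?K"
    using \<open>0 \<in> R\<close> by force
  moreover have "?K \<subseteq> span R"
    by (auto intro: span_add span_scale span_base)
  ultimately show ?thesis
    using span_subspace by blast
qed

lemma mat_set_add: "x \<in> mat_set n \<Longrightarrow> y \<in> mat_set n \<Longrightarrow> x + (y :: nat \<Rightarrow> nat \<Rightarrow> 'a::monoid_add) \<in> mat_set n"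
  by (simp add: mat_set_def)

lemma mat_set_uminus: "x \<in> mat_set n \<Longrightarrow> - (x :: nat \<Rightarrow> nat \<Rightarrow> 'a::group_add) \<in> mat_set n"
  by (simp add: mat_set_def)

lemma mat_set_diff: "x \<in> mat_set n \<Longrightarrow> y \<in> mat_set n \<Longrightarrow> x - (y :: nat \<Rightarrow> nat \<Rightarrow> 'a::group_add) \<in> mat_set n"
  by (simp add: mat_set_def)

lemma mapn_mat_set: "x \<in> mat_set n \<Longrightarrow> f 0 = 0 \<Longrightarrow> mapn f x \<in> mat_set n"
  by (simp add: mat_set_def mapn_def)

lemma sum_two_terms:
  assumes "k \<noteq> l" "k < (n::nat)" "l < n" "\<And>p. p \<noteq> k \<Longrightarrow> p \<noteq> l \<Longrightarrow> f p = 0"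
  shows "(\<Sum>p<n. f p) = f k + (f l :: 'b::comm_monoid_add)"
proof -
  have "(\<Sum>p<n. f p) = (\<Sum>p\<in>{k, l}. f p)"
  proof (rule sum.mono_neutral_right)
    show "\<forall>i\<in>{..<n} - {k, l}. f i = 0"
      using assms(4) by blast
  qed (use assms in auto)
  then show ?thesis using assms(1) by simp
qed

definition emat :: "nat \<Rightarrow> nat \<Rightarrow> nat \<Rightarrow> 'a::zero \<Rightarrow> (nat \<Rightarrow> nat \<Rightarrow> 'a)" where
  "emat n i j z = (\<lambda>a b. if a < n \<and> b < n \<and> a = i \<and> b = j then z else 0)"

lemma emat_apply:
  "emat n i j z a b = (if b = j then if a = i then if a < n \<and> b < n then z else 0 else 0 else 0)"
  by (auto simp: emat_def)

lemma emat_add: "emat n i j (x + y) = emat n i j x + emat n i j (y :: 'a::monoid_add)"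
  by (simp add: emat_def fun_eq_iff)

lemma emat_diff: "emat n i j (x - y) = emat n i j x - emat n i j (y :: 'a::group_add)"
  by (simp add: emat_def fun_eq_iff)

lemma emat_uminus: "emat n i j (- x) = - emat n i j (x :: 'a::group_add)"
  by (simp add: emat_def fun_eq_iff)

lemma sum_emat:
  "(\<Sum>i<n. \<Sum>j<n. emat n i j (f i j)) = (\<lambda>a b. if a < n \<and> b < n then f a b else (0::'a::comm_monoid_add))"
proof (intro ext)
  fix a b
  show "(\<Sum>i<n. \<Sum>j<n. emat n i j (f i j)) a b = (if a < n \<and> b < n then f a b else 0)"
    by (cases "a < n"; cases "b < n") (simp_all add: emat_apply sum.delta' sum_matrix_apply)
qed

lemma sum_emat_transpose:
  "(\<Sum>i<n. \<Sum>j<n. emat n j i (f i j)) = (\<lambda>a b. if a < n \<and> b < n then f b a else (0::'a::comm_monoid_add))"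
  by (subst sum.swap) (simp add: sum_emat)

section \<open>Accretive matrix-ordered spaces\<close>

locale amovs_space =
  fixes s :: "complex \<Rightarrow> 'a::ab_group_add \<Rightarrow> 'a"
    and C :: "nat \<Rightarrow> (nat \<Rightarrow> nat \<Rightarrow> 'a) set"
  assumes amovs: "amovs s C"
begin

sublocale vs: vector_space s
  using amovs by (simp add: amovs_def)

sublocale ms: module "mscale s"
  by unfold_locales (simp_all add: mscale_def fun_eq_iff vs.scale_right_distrib vs.scale_left_distrib)

lemma cone_subset_mat_set: "C n \<subseteq> mat_set n"
  using amovs by (simp add: amovs_def matrix_cone_def)

lemma cone_add: "a \<in> C n \<Longrightarrow> b \<in> C n \<Longrightarrow> a + b \<in> C n"
  using amovs by (simp add: amovs_def matrix_cone_def is_cone_def)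

lemma cone_real_scale: "t \<ge> 0 \<Longrightarrow> a \<in> C n \<Longrightarrow> mscale s (of_real t) a \<in> C n"
  using amovs by (simp add: amovs_def matrix_cone_def is_cone_def)

lemma cone_congr: "a \<in> C n \<Longrightarrow> congr s n k X a \<in> C k"
  using amovs by (simp add: amovs_def matrix_cone_def)

lemma zero_in_cone: "0 \<in> C n"
proof -
  have "0 \<in> C 1"
    using amovs unfolding amovs_def C_proper_def by blast
  then have "congr s 1 n (\<lambda>_ _. 0) 0 \<in> C n"
    by (rule cone_congr)
  moreover have "congr s 1 n (\<lambda>_ _. 0) 0 = 0"
    by (simp add: congr_def fun_eq_iff)
  ultimately show ?thesis by simp
qed

lemma congr_mscale: "congr s n k X (mscale s c x) = mscale s c (congr s n k X x)"
  by (simp add: congr_def mscale_def fun_eq_iff vs.scale_sum_right mult.commute)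

lemma congr_uminus: "congr s n k X (- x) = - congr s n k X x"
  by (simp add: congr_def fun_eq_iff sum_negf)

definition neutral :: "nat \<Rightarrow> (nat \<Rightarrow> nat \<Rightarrow> 'a) set" where
  "neutral n = {x \<in> C n. - x \<in> C n}"

lemma zero_in_neutral: "0 \<in> neutral n"
  by (simp add: neutral_def zero_in_cone)

lemma neutral_uminus: "x \<in> neutral n \<Longrightarrow> - x \<in> neutral n"
  by (simp add: neutral_def)

lemma neutral_add: "x \<in> neutral n \<Longrightarrow> y \<in> neutral n \<Longrightarrow> x + y \<in> neutral n"
  using cone_add[of x n y] cone_add[of "- x" n "- y"] by (simp add: neutral_def)

lemma neutral_diff: "x \<in> neutral n \<Longrightarrow> y \<in> neutral n \<Longrightarrow> x - y \<in> neutral n"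
  unfolding diff_conv_add_uminus by (intro neutral_add neutral_uminus)

lemma neutral_sum: "(\<And>i. i \<in> A \<Longrightarrow> f i \<in> neutral n) \<Longrightarrow> sum f A \<in> neutral n"
  by (induction A rule: infinite_finite_induct) (auto intro: neutral_add zero_in_neutral)

lemma neutral_real_scale:
  assumes "x \<in> neutral n"
  shows "mscale s (of_real t) x \<in> neutral n"
proof (cases "t \<ge> 0")
  case True
  then show ?thesis
    using assms cone_real_scale[of t x n] cone_real_scale[of t "- x" n] by (simp add: neutral_def)
next
  case False
  then show ?thesis
    using assms cone_real_scale[of "- t" x n] cone_real_scale[of "- t" "- x" n] by (simp add: neutral_def)
qed

lemma neutral_congr: "x \<in> neutral n \<Longrightarrow> congr s n k X x \<in> neutral k"
  by (simp add: neutral_def cone_congr flip: congr_uminus)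

lemma add_neutral_in_cone_iff:
  assumes "d \<in> neutral n"
  shows "a + d \<in> C n \<longleftrightarrow> a \<in> C n"
proof
  assume "a + d \<in> C n"
  moreover have "- d \<in> C n"
    using assms by (simp add: neutral_def)
  ultimately have "(a + d) + - d \<in> C n"
    by (rule cone_add)
  then show "a \<in> C n" by simp
qed (use assms cone_add in \<open>simp add: neutral_def\<close>)

lemma mat_set_mscale: "x \<in> mat_set n \<Longrightarrow> mscale s c x \<in> mat_set n"
  by (simp add: mat_set_def mscale_def)

lemma sa_iff_i_neutral: "x \<in> sa s C n \<longleftrightarrow> mscale s \<i> x \<in> neutral n"
  by (auto simp: sa_def neutral_def)

lemma i_neutral_in_sa: "x \<in> neutral n \<Longrightarrow> mscale s (- \<i>) x \<in> sa s C n"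
  by (simp add: sa_iff_i_neutral)

lemma sa_subset_mat_set: "sa s C n \<subseteq> mat_set n"
proof
  fix x assume "x \<in> sa s C n"
  then have "mscale s \<i> x \<in> mat_set n"
    using cone_subset_mat_set by (auto simp: sa_def)
  then have "mscale s (- \<i>) (mscale s \<i> x) \<in> mat_set n"
    by (simp add: mat_set_def mscale_def)
  then show "x \<in> mat_set n" by simp
qed

lemma zero_in_sa: "0 \<in> sa s C n"
  by (simp add: sa_iff_i_neutral zero_in_neutral)

lemma sa_uminus: "x \<in> sa s C n \<Longrightarrow> - x \<in> sa s C n"
  by (simp add: sa_iff_i_neutral neutral_uminus)

lemma sa_add: "x \<in> sa s C n \<Longrightarrow> y \<in> sa s C n \<Longrightarrow> x + y \<in> sa s C n"
  by (simp add: sa_iff_i_neutral neutral_add ms.scale_right_distrib)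

lemma sa_real_scale: "x \<in> sa s C n \<Longrightarrow> mscale s (of_real t) x \<in> sa s C n"
  using neutral_real_scale[of "mscale s \<i> x" n t]
  by (simp add: sa_iff_i_neutral mult.commute)

lemma sa_congr: "x \<in> sa s C n \<Longrightarrow> congr s n k X x \<in> sa s C k"
  by (simp add: sa_iff_i_neutral neutral_congr flip: congr_mscale)

lemma span_sa: "ms.span (sa s C n) = {a + mscale s \<i> b | a b. a \<in> sa s C n \<and> b \<in> sa s C n}"
  by (rule complex_span_of_real_subspace)
    (simp_all add: ms.module_axioms zero_in_sa sa_add sa_real_scale)

lemma smat_add: "smat ((a::'a) + b) = smat a + smat b"
  by (auto simp: smat_def fun_eq_iff)

lemma smat_scale: "smat (s c a) = mscale s c (smat a)"
  by (simp add: smat_def mscale_def fun_eq_iff)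

lemma smat_eq_0_iff: "smat a = 0 \<longleftrightarrow> a = 0"
  by (auto simp: smat_def fun_eq_iff)

lemma zero_in_sa1: "0 \<in> sa1 s C"
  using zero_in_sa[of 1] by (simp add: sa1_def smat_def zero_fun_def)

lemma sa1_add: "a \<in> sa1 s C \<Longrightarrow> b \<in> sa1 s C \<Longrightarrow> a + b \<in> sa1 s C"
  by (simp add: sa1_def smat_add sa_add)

lemma sa1_real_scale: "a \<in> sa1 s C \<Longrightarrow> s (of_real t) a \<in> sa1 s C"
  by (simp add: sa1_def smat_scale sa_real_scale)

lemma sa1_uminus: "a \<in> sa1 s C \<Longrightarrow> - a \<in> sa1 s C"
  using sa1_real_scale[of a "- 1"] by simp

lemma sa1_diff: "a \<in> sa1 s C \<Longrightarrow> b \<in> sa1 s C \<Longrightarrow> a - b \<in> sa1 s C"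
  unfolding diff_conv_add_uminus by (intro sa1_add sa1_uminus)

lemma span_sa1: "vs.span (sa1 s C) = {p + s \<i> q | p q. p \<in> sa1 s C \<and> q \<in> sa1 s C}"
  by (rule complex_span_of_real_subspace)
    (simp_all add: vs.module_axioms zero_in_sa1 sa1_add sa1_real_scale)

lemma sa_neutral_1_eq_zero: "x \<in> sa s C 1 \<Longrightarrow> x \<in> neutral 1 \<Longrightarrow> x = 0"
  using amovs unfolding amovs_def C_proper_def sa_def neutral_def by blast

lemma sa1_eq_i_sa1_imp_zero:
  assumes "p \<in> sa1 s C" "q \<in> sa1 s C" "p = s \<i> q"
  shows "p = 0"
proof -
  have "smat p \<in> neutral 1"
    using assms(2,3) by (simp add: sa1_def sa_iff_i_neutral smat_scale)
  then show ?thesis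
    using sa_neutral_1_eq_zero[of "smat p"] assms(1) by (simp add: sa1_def smat_eq_0_iff)
qed

lemma sa1_decomposition_unique:
  assumes "p \<in> sa1 s C" "q \<in> sa1 s C" "p' \<in> sa1 s C" "q' \<in> sa1 s C"
    and "p + s \<i> q = p' + s \<i> q'"
  shows "p = p'" "q = q'"
proof -
  have pq: "p - p' = s \<i> (q' - q)"
    using assms(5) by (simp add: vs.scale_right_diff_distrib algebra_simps)
  moreover have "p - p' \<in> sa1 s C" "q' - q \<in> sa1 s C"
    using assms(1-4) by (simp_all add: sa1_diff)
  ultimately have "p - p' = 0"
    by (rule sa1_eq_i_sa1_imp_zero[rotated 2])
  then show "p = p'" by simp
  with pq have "s (- \<i>) (s \<i> (q' - q)) = 0" by simp
  then show "q = q'" by simp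
qed

lemma inv1_eq:
  assumes "p \<in> sa1 s C" "q \<in> sa1 s C"
  shows "inv1 s C (p + s \<i> q) = p - s \<i> q"
proof -
  let ?P = "\<lambda>w. \<exists>a b. a \<in> sa1 s C \<and> b \<in> sa1 s C \<and> p + s \<i> q = a + s \<i> b \<and> w = a - s \<i> b"
  have "?P (p - s \<i> q)" using assms by blast
  then have "?P (SOME w. ?P w)" by (rule someI)
  then obtain a b where ab: "a \<in> sa1 s C" "b \<in> sa1 s C" "p + s \<i> q = a + s \<i> b"
    and inv: "inv1 s C (p + s \<i> q) = a - s \<i> b"
    unfolding inv1_def by blast
  from sa1_decomposition_unique[OF assms ab] inv show ?thesis
    by (simp only:)
qed

lemma sa_compression:
  assumes "x \<in> sa s C n"
  shows "(\<Sum>p<n. \<Sum>q<n. s (cnj (v p) * v q) (x p q)) \<in> sa1 s C"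
proof -
  have "congr s n 1 (\<lambda>p _. v p) x = smat (\<Sum>p<n. \<Sum>q<n. s (cnj (v p) * v q) (x p q))"
    by (simp add: congr_def smat_def fun_eq_iff)
  then show ?thesis
    using sa_congr[OF assms, of 1 "\<lambda>p _. v p"] by (simp add: sa1_def)
qed

lemma sa_diagonal_entry:
  assumes "x \<in> sa s C n" "k < n"
  shows "x k k \<in> sa1 s C"
proof -
  have "s (cnj (of_bool (p = k)) * of_bool (q = k)) (x p q) = (if q = k then if p = k then x p q else 0 else 0)"
    for p q by simp
  then have "(\<Sum>p<n. \<Sum>q<n. s (cnj (of_bool (p = k)) * of_bool (q = k)) (x p q)) = x k k"
    using assms(2) by (simp add: sum.delta)
  then show ?thesis
    using sa_compression[OF assms(1), of "\<lambda>p. of_bool (p = k)"] by simp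
qed

lemma sa_offdiagonal_pair:
  assumes x: "x \<in> sa s C n" and kl: "k \<noteq> l" "k < n" "l < n"
  shows "s c (x k l) + s (cnj c) (x l k) \<in> sa1 s C"
proof -
  define v where "v m = (if m = k then 1 else if m = l then c else 0)" for m
  have row: "(\<Sum>q<n. s (cnj (v p) * v q) (x p q)) = s (cnj (v p)) (x p k) + s (cnj (v p) * c) (x p l)" for p
    using kl by (subst sum_two_terms[OF kl]) (auto simp: v_def)
  have "(\<Sum>p<n. \<Sum>q<n. s (cnj (v p) * v q) (x p q))
      = x k k + s c (x k l) + (s (cnj c) (x l k) + s (cnj c * c) (x l l))"
    unfolding row using kl by (subst sum_two_terms[OF kl]) (auto simp: v_def)
  then have "x k k + (s c (x k l) + s (cnj c) (x l k)) + s (cnj c * c) (x l l) \<in> sa1 s C"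
    using sa_compression[OF x, of v] by (simp add: add.assoc)
  moreover have "x k k \<in> sa1 s C"
    using sa_diagonal_entry[OF x kl(2)] .
  moreover have "s (cnj c * c) (x l l) \<in> sa1 s C"
    using sa1_real_scale[OF sa_diagonal_entry[OF x kl(3)], of "(cmod c)\<^sup>2"]
    by (metis complex_norm_square mult.commute)
  ultimately show ?thesis
    using sa1_diff by (metis add_diff_cancel add_diff_cancel_left')
qed

lemma sa_entries:
  assumes x: "x \<in> sa s C n" and kl: "k < n" "l < n"
  obtains p q where "p \<in> sa1 s C" "q \<in> sa1 s C" "x k l = p + s \<i> q" "x l k = p - s \<i> q"
proof (cases "k = l")
  case True
  then show ?thesis
    using that[of "x k k" 0] sa_diagonal_entry[OF x kl(1)] zero_in_sa1 by simp
next
  case False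
  let ?p = "s (of_real (1 / 2)) (s 1 (x k l) + s (cnj 1) (x l k))"
  let ?q = "s (of_real (- 1 / 2)) (s \<i> (x k l) + s (cnj \<i>) (x l k))"
  have "?p \<in> sa1 s C" "?q \<in> sa1 s C"
    using sa_offdiagonal_pair[OF x False kl] by (simp_all only: sa1_real_scale)
  moreover have "x k l = ?p + s \<i> ?q" "x l k = ?p - s \<i> ?q"
    by (simp_all add: algebra_simps flip: vs.scale_left_distrib vs.scale_left_diff_distrib)
  ultimately show ?thesis by (rule that)
qed

lemma madj_sa_plus_i_sa:
  assumes a: "a \<in> sa s C n" and b: "b \<in> sa s C n"
  shows "madj s C n (a + mscale s \<i> b) = a - mscale s \<i> b"
proof (intro ext)
  fix k l
  show "madj s C n (a + mscale s \<i> b) k l = (a - mscale s \<i> b) k l"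
  proof (cases "k < n \<and> l < n")
    case True
    obtain p q where pq: "p \<in> sa1 s C" "q \<in> sa1 s C" "a k l = p + s \<i> q" "a l k = p - s \<i> q"
      using sa_entries[OF a] True by blast
    obtain p' q' where pq': "p' \<in> sa1 s C" "q' \<in> sa1 s C" "b k l = p' + s \<i> q'" "b l k = p' - s \<i> q'"
      using sa_entries[OF b] True by blast
    have "a l k + s \<i> (b l k) = (p + q') + s \<i> (p' - q)"
      by (simp add: pq pq' algebra_simps)
    then have "inv1 s C (a l k + s \<i> (b l k)) = (p + q') - s \<i> (p' - q)"
      using inv1_eq[OF sa1_add[OF pq(1) pq'(2)] sa1_diff[OF pq'(1) pq(2)]] by simp
    also have "\<dots> = a k l - s \<i> (b k l)"
      by (simp add: pq pq' algebra_simps)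
    finally show ?thesis
      using True by (simp add: madj_def mscale_def)
  next
    case False
    moreover have "a \<in> mat_set n" "b \<in> mat_set n"
      using sa_subset_mat_set a b by blast+
    ultimately have "a k l = 0" "b k l = 0"
      by (auto simp: mat_set_def)
    with False show ?thesis
      by (auto simp: madj_def mscale_def)
  qed
qed

lemma sa1_iff_i_neutral: "p \<in> sa1 s C \<longleftrightarrow> smat (s \<i> p) \<in> neutral 1"
  by (simp add: sa1_def sa_iff_i_neutral smat_scale)

lemma congr_smat:
  "congr s 1 n (\<lambda>_ b. v b) (smat z) = (\<lambda>a b. if a < n \<and> b < n then s (cnj (v a) * v b) z else 0)"
  by (simp add: congr_def smat_def fun_eq_iff)

lemma scale_if_zero: "s (if P then c else 0) z = (if P then s c z else 0)"
  by simp

lemma congr_smat_polarization: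
  "congr s 1 n (\<lambda>_ b. u b + v b) (smat z) - congr s 1 n (\<lambda>_ b. u b) (smat z) - congr s 1 n (\<lambda>_ b. v b) (smat z)
    = (\<lambda>a b. if a < n \<and> b < n then s (cnj (u a) * v b + cnj (v a) * u b) z else 0)"
proof (intro ext)
  fix a b
  have "s (cnj (u a + v a) * (u b + v b)) z - s (cnj (u a) * u b) z - s (cnj (v a) * v b) z
      = s (cnj (u a) * v b + cnj (v a) * u b) z"
    by (simp add: ring_distribs vs.scale_left_distrib)
  then show "(congr s 1 n (\<lambda>_ b. u b + v b) (smat z) - congr s 1 n (\<lambda>_ b. u b) (smat z)
      - congr s 1 n (\<lambda>_ b. v b) (smat z)) a b
    = (if a < n \<and> b < n then s (cnj (u a) * v b + cnj (v a) * u b) z else 0)"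
    unfolding congr_smat by simp
qed

text \<open>Polarizing the congruence images of \<open>smat z\<close> with \<open>v = e\<^sub>i + c e\<^sub>j\<close> isolates the
  entries \<open>(i, j)\<close> and \<open>(j, i)\<close>.\<close>

lemma neutral_emat_pair:
  assumes "smat z \<in> neutral 1"
  shows "emat n i j (s c z) + emat n j i (s (cnj c) z) \<in> neutral n"
proof -
  define e where "e m = (of_bool (m = i) :: complex)" for m
  define f where "f m = of_bool (m = j) * c" for m
  have coeff: "cnj (e a) * f b + cnj (f a) * e b
      = (if a = i \<and> b = j then c else 0) + (if a = j \<and> b = i then cnj c else 0)" for a b
    unfolding e_def f_def
    by (cases "a = i"; cases "a = j"; cases "b = i"; cases "b = j") auto
  have "(\<lambda>a b. if a < n \<and> b < n then s (cnj (e a) * f b + cnj (f a) * e b) z else 0)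
      = emat n i j (s c z) + emat n j i (s (cnj c) z)"
  proof (intro ext)
    fix a b
    show "(if a < n \<and> b < n then s (cnj (e a) * f b + cnj (f a) * e b) z else 0)
        = (emat n i j (s c z) + emat n j i (s (cnj c) z)) a b"
      unfolding coeff
      by (cases "a < n"; cases "b < n")
        (simp_all add: emat_def vs.scale_left_distrib scale_if_zero split del: if_split)
  qed
  moreover have "congr s 1 n (\<lambda>_ b. e b + f b) (smat z) - congr s 1 n (\<lambda>_ b. e b) (smat z)
      - congr s 1 n (\<lambda>_ b. f b) (smat z) \<in> neutral n"
    using assms by (intro neutral_diff neutral_congr)
  ultimately show ?thesis
    unfolding congr_smat_polarization by simp
qed

lemma sa_decomposition_of_neutral_sum:
  assumes "x + y \<in> neutral n" "x - y \<in> sa s C n"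
  obtains a b where "a \<in> sa s C n" "b \<in> sa s C n" "x = a + mscale s \<i> b" "y = - a + mscale s \<i> b"
proof
  let ?h = "\<lambda>v. mscale s (of_real (1 / 2)) v"
  have half: "mscale s (1 / 2) v + mscale s (1 / 2) v = v" for v
    by (simp flip: ms.scale_left_distrib)
  show "?h (x - y) \<in> sa s C n"
    using assms(2) by (rule sa_real_scale)
  show "?h (mscale s (- \<i>) (x + y)) \<in> sa s C n"
    using assms(1) by (intro sa_real_scale i_neutral_in_sa)
  have i_b: "mscale s \<i> (?h (mscale s (- \<i>) (x + y))) = ?h x + ?h y"
    unfolding ms.scale_scale by (simp add: ms.scale_right_distrib)
  show "x = ?h (x - y) + mscale s \<i> (?h (mscale s (- \<i>) (x + y)))"
    unfolding i_b by (simp add: ms.scale_right_diff_distrib half)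
  show "y = - ?h (x - y) + mscale s \<i> (?h (mscale s (- \<i>) (x + y)))"
    unfolding i_b by (simp add: ms.scale_right_diff_distrib half)
qed

end

section \<open>Self-adjoint spaces\<close>

locale self_adjoint_amovs = amovs_space +
  assumes self_adjoint: "self_adjoint s C"
begin

lemma sa1_decomposition:
  obtains p q where "p \<in> sa1 s C" "q \<in> sa1 s C" "z = p + s \<i> q"
  using self_adjoint unfolding self_adjoint_def span_sa1 by blast

lemma inv1_scale_i: "inv1 s C (s \<i> z) = - s \<i> (inv1 s C z)"
proof -
  obtain p q where pq: "p \<in> sa1 s C" "q \<in> sa1 s C" "z = p + s \<i> q"
    by (rule sa1_decomposition)
  have "s \<i> z = - q + s \<i> p"
    by (simp add: pq vs.scale_right_distrib)
  then have "inv1 s C (s \<i> z) = - q - s \<i> p"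
    using inv1_eq[OF sa1_uminus[OF pq(2)] pq(1)] by simp
  also have "\<dots> = - s \<i> (p - s \<i> q)"
    by (simp add: vs.scale_right_diff_distrib)
  finally show ?thesis
    using inv1_eq[OF pq(1,2)] pq(3) by simp
qed

lemma madj_mscale_i: "madj s C n (mscale s \<i> w) = - mscale s \<i> (madj s C n w)"
  by (simp add: madj_def mscale_def fun_eq_iff inv1_scale_i)

lemma skew_part_in_neutral:
  assumes "w \<in> mat_set n"
  shows "w - madj s C n w \<in> neutral n"
proof -
  have "\<forall>z. \<exists>p q. p \<in> sa1 s C \<and> q \<in> sa1 s C \<and> z = p + s \<i> q"
    by (metis sa1_decomposition)
  then obtain P Q where PQ: "\<And>z. P z \<in> sa1 s C" "\<And>z. Q z \<in> sa1 s C" "\<And>z. z = P z + s \<i> (Q z)"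
    by metis
  have inv: "inv1 s C z = P z - s \<i> (Q z)" for z
    using inv1_eq[OF PQ(1,2), of z z] PQ(3)[of z] by simp
  \<comment> \<open>Instances of \<open>neutral_emat_pair\<close> with \<open>z = \<i> P\<close>, \<open>c = -\<i>\<close> and \<open>z = \<i> Q\<close>, \<open>c = 1\<close>;
    they add up to \<open>w - w\<^sup>*\<close>.\<close>
  define M where "M i j =
      emat n i j (s (- \<i>) (s \<i> (P (w i j)))) + emat n j i (s (cnj (- \<i>)) (s \<i> (P (w i j))))
    + (emat n i j (s 1 (s \<i> (Q (w i j)))) + emat n j i (s (cnj 1) (s \<i> (Q (w i j)))))" for i j
  have M_neutral: "M i j \<in> neutral n" for i j
    unfolding M_def
    by (rule neutral_add[OF neutral_emat_pair neutral_emat_pair])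
      (use PQ(1,2) in \<open>simp_all add: sa1_iff_i_neutral\<close>)
  have M_eq: "M i j = emat n i j (P (w i j) + s \<i> (Q (w i j))) + emat n j i (s \<i> (Q (w i j)) - P (w i j))"
    for i j
    by (simp add: M_def emat_add emat_diff emat_uminus)
  have "w - madj s C n w = (\<Sum>i<n. \<Sum>j<n. M i j)"
    unfolding M_eq sum.distrib sum_emat sum_emat_transpose
    using assms by (auto simp: fun_eq_iff madj_def inv mat_set_def simp flip: PQ(3))
  then show ?thesis
    using M_neutral by (simp add: neutral_sum)
qed

end

section \<open>\<open>*\<close>-closures\<close>

locale star_closure_space = Z: amovs_space sZ C
  for sZ :: "complex \<Rightarrow> 'a::ab_group_add \<Rightarrow> 'a" and C +
  fixes sV :: "complex \<Rightarrow> 'b::ab_group_add \<Rightarrow> 'b"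
    and D :: "nat \<Rightarrow> (nat \<Rightarrow> nat \<Rightarrow> 'b) set"
    and \<phi> :: "'a \<Rightarrow> 'b"
  assumes star_closure: "star_closure sZ C sV D \<phi>"
begin

sublocale V: self_adjoint_amovs sV D
  using star_closure by unfold_locales (simp_all add: star_closure_def)

sublocale phi: module_hom sZ sV \<phi>
  using star_closure by (simp add: star_closure_def module_hom_iff_linear)

lemma mapn_add: "mapn \<phi> (a + b) = mapn \<phi> a + mapn \<phi> b"
  by (simp add: mapn_def fun_eq_iff phi.add)

lemma mapn_uminus: "mapn \<phi> (- a) = - mapn \<phi> a"
  by (simp add: mapn_def fun_eq_iff phi.neg)

lemma mapn_diff: "mapn \<phi> (a - b) = mapn \<phi> a - mapn \<phi> b"
  by (simp add: mapn_def fun_eq_iff phi.diff)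

lemma mapn_mscale: "mapn \<phi> (mscale sZ c a) = mscale sV c (mapn \<phi> a)"
  by (simp add: mapn_def mscale_def fun_eq_iff phi.scale)

lemma mapn_phi_mat_set: "x \<in> mat_set n \<Longrightarrow> mapn \<phi> x \<in> mat_set n"
  by (simp add: mapn_mat_set phi.zero)

lemma mapn_in_cone_iff: "x \<in> mat_set n \<Longrightarrow> mapn \<phi> x \<in> D n \<longleftrightarrow> x \<in> C n"
  using star_closure by (auto simp: star_closure_def real_coe_def real_cp_def)

lemma mapn_in_neutral_iff: "x \<in> mat_set n \<Longrightarrow> mapn \<phi> x \<in> V.neutral n \<longleftrightarrow> x \<in> Z.neutral n"
  by (simp add: V.neutral_def Z.neutral_def mapn_in_cone_iff mat_set_uminus flip: mapn_uminus)

lemma mapn_sa: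
  assumes "a \<in> sa sZ C n"
  shows "mapn \<phi> a \<in> sa sV D n"
proof -
  have "a \<in> mat_set n"
    using assms Z.sa_subset_mat_set by blast
  then have "mscale sZ \<i> a \<in> Z.neutral n" "mscale sZ \<i> a \<in> mat_set n"
    using assms by (simp_all add: Z.sa_iff_i_neutral Z.mat_set_mscale)
  then have "mapn \<phi> (mscale sZ \<i> a) \<in> V.neutral n"
    by (simp add: mapn_in_neutral_iff)
  then show ?thesis
    by (simp add: V.sa_iff_i_neutral mapn_mscale)
qed

lemma add_adj_in_cone_iff:
  assumes "x \<in> mat_set n" "y \<in> mat_set n"
  shows "mapn \<phi> x + madj sV D n (mapn \<phi> y) \<in> D n \<longleftrightarrow> x + y \<in> C n"
proof -
  let ?w = "mapn \<phi> y"
  have "mapn \<phi> x + madj sV D n ?w = mapn \<phi> (x + y) + - (?w - madj sV D n ?w)"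
    by (simp add: mapn_add)
  moreover have "- (?w - madj sV D n ?w) \<in> V.neutral n"
    using assms(2) by (intro V.neutral_uminus V.skew_part_in_neutral mapn_phi_mat_set)
  ultimately have "mapn \<phi> x + madj sV D n ?w \<in> D n \<longleftrightarrow> mapn \<phi> (x + y) \<in> D n"
    by (simp only: V.add_neutral_in_cone_iff)
  also have "\<dots> \<longleftrightarrow> x + y \<in> C n"
    using assms by (intro mapn_in_cone_iff mat_set_add)
  finally show ?thesis .
qed

lemma add_adj_eq_0_imp_neutral_sa:
  assumes x: "x \<in> mat_set n" and y: "y \<in> mat_set n"
    and "mapn \<phi> x + madj sV D n (mapn \<phi> y) = 0"
  shows "x + y \<in> Z.neutral n" "x - y \<in> sa sZ C n"
proof -
  let ?w = "mapn \<phi> y"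
  have u: "mapn \<phi> x = - madj sV D n ?w"
    using assms(3) by (simp add: eq_neg_iff_add_eq_0)
  have "mapn \<phi> (x + y) = ?w - madj sV D n ?w"
    by (simp add: mapn_add u)
  then have "mapn \<phi> (x + y) \<in> V.neutral n"
    using y by (simp add: V.skew_part_in_neutral mapn_phi_mat_set)
  then show "x + y \<in> Z.neutral n"
    using x y by (simp add: mapn_in_neutral_iff mat_set_add)
  have "mapn \<phi> (mscale sZ \<i> (x - y)) = - (mscale sV \<i> ?w - madj sV D n (mscale sV \<i> ?w))"
    by (simp add: mapn_mscale mapn_diff u V.madj_mscale_i V.ms.scale_right_diff_distrib)
  moreover have "- (mscale sV \<i> ?w - madj sV D n (mscale sV \<i> ?w)) \<in> V.neutral n"
    using y by (intro V.neutral_uminus V.skew_part_in_neutral V.mat_set_mscale mapn_phi_mat_set)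
  ultimately have "mapn \<phi> (mscale sZ \<i> (x - y)) \<in> V.neutral n"
    by (simp only:)
  then show "x - y \<in> sa sZ C n"
    using x y by (simp add: Z.sa_iff_i_neutral mapn_in_neutral_iff Z.mat_set_mscale mat_set_diff)
qed

lemma add_adj_eq_0_iff:
  assumes x: "x \<in> mat_set n" and y: "y \<in> mat_set n"
  shows "mapn \<phi> x + madj sV D n (mapn \<phi> y) = 0 \<longleftrightarrow>
    x \<in> Z.ms.span (sa sZ C n) \<and> y \<in> Z.ms.span (sa sZ C n) \<and> y = - madj sZ C n x"
proof
  assume "mapn \<phi> x + madj sV D n (mapn \<phi> y) = 0"
  with x y have "x + y \<in> Z.neutral n" "x - y \<in> sa sZ C n"
    by (rule add_adj_eq_0_imp_neutral_sa)+
  then obtain a b where ab: "a \<in> sa sZ C n" "b \<in> sa sZ C n"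
    and xy: "x = a + mscale sZ \<i> b" "y = - a + mscale sZ \<i> b"
    by (rule Z.sa_decomposition_of_neutral_sum)
  moreover have "- a \<in> sa sZ C n"
    using ab(1) by (rule Z.sa_uminus)
  ultimately have "x \<in> Z.ms.span (sa sZ C n)" "y \<in> Z.ms.span (sa sZ C n)"
    unfolding Z.span_sa by blast+
  moreover have "y = - madj sZ C n x"
    using ab by (simp add: xy Z.madj_sa_plus_i_sa)
  ultimately show "x \<in> Z.ms.span (sa sZ C n) \<and> y \<in> Z.ms.span (sa sZ C n) \<and> y = - madj sZ C n x"
    by blast
next
  assume "x \<in> Z.ms.span (sa sZ C n) \<and> y \<in> Z.ms.span (sa sZ C n) \<and> y = - madj sZ C n x"
  then obtain a b where ab: "a \<in> sa sZ C n" "b \<in> sa sZ C n" "x = a + mscale sZ \<i> b"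
    and "y = - madj sZ C n x"
    by (auto simp: Z.span_sa)
  then have "y = - a + mscale sZ \<i> b"
    by (simp add: Z.madj_sa_plus_i_sa)
  then have "madj sV D n (mapn \<phi> y) = - mapn \<phi> a - mscale sV \<i> (mapn \<phi> b)"
    using V.madj_sa_plus_i_sa[OF V.sa_uminus[OF mapn_sa[OF ab(1)]] mapn_sa[OF ab(2)]]
    by (simp add: mapn_add mapn_uminus mapn_diff mapn_mscale)
  then show "mapn \<phi> x + madj sV D n (mapn \<phi> y) = 0"
    by (simp add: ab(3) mapn_add mapn_mscale)
qed

end

theorem lemma2p8:
  fixes sZ :: "complex \<Rightarrow> 'a::ab_group_add \<Rightarrow> 'a"
    and C :: "nat \<Rightarrow> (nat \<Rightarrow> nat \<Rightarrow> 'a) set"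
    and sV :: "complex \<Rightarrow> 'b::ab_group_add \<Rightarrow> 'b"
    and D :: "nat \<Rightarrow> (nat \<Rightarrow> nat \<Rightarrow> 'b) set"
    and \<phi> :: "'a \<Rightarrow> 'b"
    and n :: nat and x y :: "nat \<Rightarrow> nat \<Rightarrow> 'a"
  assumes "amovs sZ C"
    and "star_closure sZ C sV D \<phi>"
    and "x \<in> mat_set n" and "y \<in> mat_set n"
  shows "(mapn \<phi> x + madj sV D n (mapn \<phi> y) \<in> D n \<longleftrightarrow> x + y \<in> C n)
    \<and> (mapn \<phi> x + madj sV D n (mapn \<phi> y) = 0 \<longleftrightarrow>
         x \<in> module.span (mscale sZ) (sa sZ C n) \<and> y \<in> module.span (mscale sZ) (sa sZ C n)
         \<and> y = - madj sZ C n x)"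
proof -
  interpret star_closure_space sZ C sV D \<phi>
    using assms(1,2) by unfold_locales
  show ?thesis
    using add_adj_in_cone_iff[OF assms(3,4)] add_adj_eq_0_iff[OF assms(3,4)] by simp
qed

end
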